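(* Assume Assumption A and that the limiting chain $X_R$ has $\mathfrak n\ge2$ recurrent classes $\mathscr E_1,\dots,\mathscr E_{\mathfrak n}$; let $\breve{\mathscr E}_x=\bigcup_{y\ne x}\mathscr E_y$. Then the family of sequences $\big(\mathrm{Cap}_N(\mathscr E_x,\breve{\mathscr E}_x)/\mu_N(\mathscr E_x)\big)_{N\ge1}$, $x\in\{1,\dots,\mathfrak n\}$, is ordered.
   Context: Setting: $E$ is a fixed finite set; for each $N\ge1$, $(\eta^N_t)$ is a continuous-time irreducible Markov chain on $E$ with jump rates $R_N(\eta,\xi)$, holding rates $\lambda_N(\eta)=\sum_{\xi\ne\eta}R_N(\eta,\xi)$, unique invariant probability measure $\mu_N$; $\mathbb P_\eta$ the law started at $\eta$; $H_A=\inf\{t>0:\eta^N_t\in A\}$, $H^+_A=\inf\{t>\tau_1:\eta^N_t\in A\}$, $\tau_1$ first jump time; $\mathrm{Cap}_N(A,B)=\sum_{\eta\in A}\mu_N(\eta)\lambda_N(\eta)\mathbb P_\eta[H_B<H^+_A]$. Ordered families: a finite family of sequences of positive reals $(a^r_N)$, $r\in\mathfrak R$, is ordered if for all $r\neq s$, $\arctan(a^r_N/a^s_N)$ converges. Assumption A: (i) for each $\eta\neq\xi$, either $R_N(\eta,\xi)=0$ for all $N$ or $R_N(\eta,\xi)>0$ for all $N$; let $\mathbb B$ be the set of pairs with positive rates. (ii) For every $m\ge1$ the family $\prod_{(\eta,\xi)\in\mathbb B}R_N(\eta,\xi)^{k(\eta,\xi)}$, $k:\mathbb B\to\mathbb Z_+$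 with $\sum k=m$, is ordered. Limiting chain: $\alpha_N^{-1}=\sum_\eta\sum_{\xi\ne\eta}R_N(\eta,\xi)$; $R(\eta,\xi)=\lim_N\alpha_NR_N(\eta,\xi)\in[0,1]$; $X_R$ is the Markov chain on $E$ with rates $R$. *)

theory Defs
  imports "HOL-Analysis.Analysis"
begin

text \<open>Rates: R x y is the jump rate from x to y (diagonal values are ignored).\<close>

definition hold_rate :: "('a::finite \<Rightarrow> 'a \<Rightarrow> real) \<Rightarrow> 'a \<Rightarrow> real" where
  "hold_rate R x = (\<Sum>y\<in>UNIV - {x}. R x y)"

definition jump_graph :: "('a \<Rightarrow> 'a \<Rightarrow> real) \<Rightarrow> ('a \<times> 'a) set" where
  "jump_graph R = {(a, b). a \<noteq> b \<and> R a b > 0}"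

definition reachable :: "('a \<Rightarrow> 'a \<Rightarrow> real) \<Rightarrow> 'a \<Rightarrow> 'a \<Rightarrow> bool" where
  "reachable R x y \<longleftrightarrow> (x, y) \<in> (jump_graph R)\<^sup>*"

definition irreducible_chain :: "('a \<Rightarrow> 'a \<Rightarrow> real) \<Rightarrow> bool" where
  "irreducible_chain R \<longleftrightarrow> (\<forall>x y. reachable R x y)"

definition invariant_prob :: "('a::finite \<Rightarrow> 'a \<Rightarrow> real) \<Rightarrow> ('a \<Rightarrow> real) \<Rightarrow> bool" where
  "invariant_prob R \<mu> \<longleftrightarrow> (\<forall>x. \<mu> x \<ge> 0) \<and> sum \<mu> UNIV = 1 \<and>
     (\<forall>y. (\<Sum>x\<in>UNIV - {y}. \<mu> x * R x y) = \<mu> y * hold_rate R y)"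

definition inv_meas :: "('a::finite \<Rightarrow> 'a \<Rightarrow> real) \<Rightarrow> 'a \<Rightarrow> real" where
  "inv_meas R = (THE \<mu>. invariant_prob R \<mu>)"

definition jump_prob :: "('a::finite \<Rightarrow> 'a \<Rightarrow> real) \<Rightarrow> 'a \<Rightarrow> 'a \<Rightarrow> real" where
  "jump_prob R x y = (if x = y then 0 else R x y / hold_rate R x)"

fun path_weight :: "('a \<Rightarrow> 'a \<Rightarrow> real) \<Rightarrow> 'a \<Rightarrow> 'a list \<Rightarrow> real" where
  "path_weight P x [] = 1"
| "path_weight P x (y # ys) = P x y * path_weight P y ys"

text \<open>P_eta[H_B < H_A^+]: if eta is in B then H_B = 0 < H_A^+; otherwise the event is the
  disjoint union over k of the cylinder events that the jump chain visits at steps 1..k-1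
  states outside A and B and at step k a state of B not in A.\<close>
definition escape_prob :: "('a::finite \<Rightarrow> 'a \<Rightarrow> real) \<Rightarrow> 'a set \<Rightarrow> 'a set \<Rightarrow> 'a \<Rightarrow> real" where
  "escape_prob R A B \<eta> =
    (if \<eta> \<in> B then 1 else
     (\<Sum>k. \<Sum>xs\<in>{xs. length xs = Suc k \<and> last xs \<in> B - A \<and> (\<forall>i<k. xs ! i \<notin> A \<union> B)}.
            path_weight (jump_prob R) \<eta> xs))"

definition capacity :: "('a::finite \<Rightarrow> 'a \<Rightarrow> real) \<Rightarrow> 'a set \<Rightarrow> 'a set \<Rightarrow> real" where
  "capacity R A B = (\<Sum>\<eta>\<in>A. inv_meas R \<eta> * hold_rate R \<eta> * escape_prob R A B \<eta>)"

definition ordered_family :: "'i set \<Rightarrow> ('i \<Rightarrow> nat \<Rightarrow> real) \<Rightarrow> bool" where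
  "ordered_family I a \<longleftrightarrow> (\<forall>r\<in>I. \<forall>N. a r N > 0) \<and>
     (\<forall>r\<in>I. \<forall>s\<in>I. r \<noteq> s \<longrightarrow> convergent (\<lambda>N. arctan (a r N / a s N)))"

definition assumption_A :: "(nat \<Rightarrow> 'a::finite \<Rightarrow> 'a \<Rightarrow> real) \<Rightarrow> bool" where
  "assumption_A RN \<longleftrightarrow>
     (\<forall>x y. x \<noteq> y \<longrightarrow> (\<forall>N. RN N x y = 0) \<or> (\<forall>N. RN N x y > 0)) \<and>
     (\<forall>m\<ge>1. ordered_family
        {k :: 'a \<times> 'a \<Rightarrow> nat. (\<forall>p. p \<notin> jump_graph (RN 0) \<longrightarrow> k p = 0) \<and>
                               sum k (jump_graph (RN 0)) = m}
        (\<lambda>k N. \<Prod>p\<in>jump_graph (RN 0). RN N (fst p) (snd p) ^ k p))"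

definition time_scale :: "(nat \<Rightarrow> 'a::finite \<Rightarrow> 'a \<Rightarrow> real) \<Rightarrow> nat \<Rightarrow> real" where
  "time_scale RN N = 1 / (\<Sum>\<eta>\<in>UNIV. \<Sum>\<xi>\<in>UNIV - {\<eta>}. RN N \<eta> \<xi>)"

definition limit_rates :: "(nat \<Rightarrow> 'a::finite \<Rightarrow> 'a \<Rightarrow> real) \<Rightarrow> 'a \<Rightarrow> 'a \<Rightarrow> real" where
  "limit_rates RN \<eta> \<xi> = lim (\<lambda>N. time_scale RN N * RN N \<eta> \<xi>)"

definition recurrent_state :: "('a \<Rightarrow> 'a \<Rightarrow> real) \<Rightarrow> 'a \<Rightarrow> bool" where
  "recurrent_state R x \<longleftrightarrow> (\<forall>y. reachable R x y \<longrightarrow> reachable R y x)"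

definition recurrent_classes :: "('a \<Rightarrow> 'a \<Rightarrow> real) \<Rightarrow> 'a set set" where
  "recurrent_classes R =
     (\<lambda>x. {y. reachable R x y \<and> reachable R y x}) ` {x. recurrent_state R x}"

end

theory Submission
  imports Defs
begin

text \<open>Call a positive sequence tame of degree \<open>d\<close> if it is asymptotic to a positive multiple
  of a quotient of two monomials in the rates \<open>R\<^sub>N(\<eta>, \<xi>)\<close> whose degrees differ by \<open>d\<close>.
  By Assumption A two tame sequences of the same degree have a limiting ratio in \<open>[0, \<infinity>]\<close>,
  so a family of them is ordered. Tameness of a fixed degree is stable under sums (the dominant
  summand wins), and degrees add under products and subtract under quotients.

  Eliminating the states one at a time (Gaussian elimination of the generator, i.e. passing
  to trace chains) builds the invariant measure, and the equilibrium potential \<open>h\<close> between a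
  class \<open>C\<close> and the union \<open>B\<close> of the other classes, from the rates by exactly these
  operations. So \<open>\<mu>\<^sub>N(x)\<close> is tame of degree 0 and \<open>h\<^sub>N(x)\<close> is tame of degree 0 or identically
  zero; hence \<open>Cap\<^sub>N(C, B) = \<Sum>e\<in>C. \<mu>\<^sub>N(e) \<Sum>y. R\<^sub>N(e, y) h\<^sub>N(y)\<close> is tame of degree 1, and so
  is its quotient by \<open>\<mu>\<^sub>N(C)\<close>. Nothing about the limiting chain is used beyond the fact that
  its recurrent classes are at least two disjoint nonempty sets.\<close>

section \<open>Sequences with a limit in \<open>[0, \<infinity>]\<close>\<close>

definition has_extended_limit :: "(nat \<Rightarrow> real) \<Rightarrow> bool" where
  "has_extended_limit x \<longleftrightarrow> (\<exists>L\<ge>0. x \<longlonglongrightarrow> L) \<or> filterlim x at_top sequentially"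

lemma has_extended_limit_iff_convergent_arctan:
  fixes x :: "nat \<Rightarrow> real"
  assumes pos: "\<And>N. x N > 0"
  shows "has_extended_limit x \<longleftrightarrow> convergent (\<lambda>N. arctan (x N))"
proof
  assume "has_extended_limit x"
  then consider L where "x \<longlonglongrightarrow> L" | "filterlim x at_top sequentially"
    unfolding has_extended_limit_def by blast
  then show "convergent (\<lambda>N. arctan (x N))"
  proof cases
    case 1
    then show ?thesis by (rule convergentI[OF tendsto_arctan])
  next
    case 2
    then show ?thesis by (rule convergentI[OF filterlim_compose[OF tendsto_arctan_at_top]])
  qed
next
  assume "convergent (\<lambda>N. arctan (x N))"
  then obtain \<theta> where \<theta>: "(\<lambda>N. arctan (x N)) \<longlonglongrightarrow> \<theta>" unfolding convergent_def by blast
  have "\<theta> \<le> pi / 2"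
    using \<theta> by (rule LIMSEQ_le_const2) (intro exI[of _ 0] allI impI less_imp_le arctan_ubound)
  moreover have "0 \<le> \<theta>"
    using \<theta> by (rule LIMSEQ_le_const) (auto intro: less_imp_le pos)
  ultimately consider "\<theta> < pi / 2" | "\<theta> = pi / 2" by linarith
  then show "has_extended_limit x"
  proof cases
    case 1
    with \<open>0 \<le> \<theta>\<close> have "isCont tan \<theta>"
      by (intro isCont_tan) (simp add: cos_gt_zero_pi[THEN less_imp_neq, symmetric])
    then have "(\<lambda>N. tan (arctan (x N))) \<longlonglongrightarrow> tan \<theta>"
      using \<theta> isCont_tendsto_compose by blast
    then have lim: "x \<longlonglongrightarrow> tan \<theta>" by (simp add: tan_arctan)
    moreover have "0 \<le> tan \<theta>"
      using lim by (rule LIMSEQ_le_const) (auto intro: less_imp_le pos)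
    ultimately show ?thesis unfolding has_extended_limit_def by blast
  next
    case 2
    have "filterlim x at_top sequentially"
      unfolding filterlim_at_top
    proof
      fix Z :: real
      have "arctan Z < \<theta>" using 2 arctan_ubound[of Z] by simp
      then have "eventually (\<lambda>N. arctan Z < arctan (x N)) sequentially"
        using \<theta> order_tendstoD(1) by blast
      then show "eventually (\<lambda>N. Z \<le> x N) sequentially"
        by (rule eventually_mono) (simp add: arctan_less_iff)
    qed
    then show ?thesis unfolding has_extended_limit_def by blast
  qed
qed

lemma has_extended_limit_mult_tendsto:
  assumes "has_extended_limit x" and y: "y \<longlonglongrightarrow> c" and "c > 0"
  shows "has_extended_limit (\<lambda>N. y N * x N)"
  using assms(1) unfolding has_extended_limit_def
proof
  assume "\<exists>L\<ge>0. x \<longlonglongrightarrow> L"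
  then obtain L where "L \<ge> 0" "x \<longlonglongrightarrow> L" by blast
  then have "(\<lambda>N. y N * x N) \<longlonglongrightarrow> c * L" "c * L \<ge> 0"
    using y \<open>c > 0\<close> by (auto intro: tendsto_mult)
  then show "(\<exists>L\<ge>0. (\<lambda>N. y N * x N) \<longlonglongrightarrow> L) \<or> filterlim (\<lambda>N. y N * x N) at_top sequentially"
    by blast
next
  assume "filterlim x at_top sequentially"
  then show "(\<exists>L\<ge>0. (\<lambda>N. y N * x N) \<longlonglongrightarrow> L) \<or> filterlim (\<lambda>N. y N * x N) at_top sequentially"
    using filterlim_tendsto_pos_mult_at_top[OF y \<open>c > 0\<close>] by blast
qed

section \<open>Elimination of a state\<close>

definition harmonic_at :: "('a::finite \<Rightarrow> 'a \<Rightarrow> real) \<Rightarrow> ('a \<Rightarrow> real) \<Rightarrow> 'a \<Rightarrow> bool" where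
  "harmonic_at r h x \<longleftrightarrow> hold_rate r x * h x = (\<Sum>y\<in>UNIV - {x}. r x y * h y)"

definition balanced_at :: "('a::finite \<Rightarrow> 'a \<Rightarrow> real) \<Rightarrow> ('a \<Rightarrow> real) \<Rightarrow> 'a \<Rightarrow> bool" where
  "balanced_at r m y \<longleftrightarrow> (\<Sum>x\<in>UNIV - {y}. m x * r x y) = m y * hold_rate r y"

text \<open>Rates of the trace of the chain on \<open>UNIV - {z}\<close>; on the generator this is one step of
  Gaussian elimination, removing the row and column of \<open>z\<close>.\<close>
definition eliminate :: "('a::finite \<Rightarrow> 'a \<Rightarrow> real) \<Rightarrow> 'a \<Rightarrow> 'a \<Rightarrow> 'a \<Rightarrow> real" where
  "eliminate r z a b = (if a = z \<or> b = z then 0 else r a b + r a z * r z b / hold_rate r z)"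

lemma hold_rate_nonneg: "(\<And>x y. r x y \<ge> 0) \<Longrightarrow> hold_rate r x \<ge> 0"
  unfolding hold_rate_def by (simp add: sum_nonneg)

lemma sum_remove_two:
  fixes f :: "'a::finite \<Rightarrow> real"
  assumes "x \<noteq> z"
  shows "(\<Sum>y\<in>UNIV - {x}. f y) = f z + (\<Sum>y\<in>UNIV - {x, z}. f y)"
  using assms by (subst sum.remove[of _ z]) (auto simp: Diff_insert2[symmetric] insert_commute)

lemma sum_eliminate_right:
  fixes r :: "'a::finite \<Rightarrow> 'a \<Rightarrow> real"
  assumes xz: "x \<noteq> z" and l: "hold_rate r z \<noteq> 0" and hz: "harmonic_at r h z"
  shows "(\<Sum>y\<in>UNIV - {x}. eliminate r z x y * h y) =
    (\<Sum>y\<in>UNIV - {x}. r x y * h y) - r x z * r z x / hold_rate r z * h x"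
proof -
  let ?l = "hold_rate r z" and ?U = "UNIV - {x, z}"
  have "?l * h z = r z x * h x + (\<Sum>y\<in>?U. r z y * h y)"
    using hz sum_remove_two[of z x "\<lambda>y. r z y * h y"] xz
    unfolding harmonic_at_def by (simp add: insert_commute)
  then have Sz: "(\<Sum>y\<in>?U. r z y * h y) = ?l * h z - r z x * h x" by simp
  have "(\<Sum>y\<in>UNIV - {x}. eliminate r z x y * h y) =
      (\<Sum>y\<in>?U. r x y * h y + r x z / ?l * (r z y * h y))"
    using xz
      by (subst sum_remove_two[of x z]) (auto simp: eliminate_def algebra_simps intro!: sum.cong)
  also have "\<dots> = (\<Sum>y\<in>?U. r x y * h y) + r x z / ?l * (\<Sum>y\<in>?U. r z y * h y)"
    by (simp add: sum.distrib sum_distrib_left)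
  also have "\<dots> = (\<Sum>y\<in>UNIV - {x}. r x y * h y) - r x z * r z x / ?l * h x"
    unfolding Sz sum_remove_two[OF xz, of "\<lambda>y. r x y * h y"] using l by (simp add: field_simps)
  finally show ?thesis .
qed

lemma sum_eliminate_left:
  fixes r :: "'a::finite \<Rightarrow> 'a \<Rightarrow> real"
  assumes yz: "y \<noteq> z" and l: "hold_rate r z \<noteq> 0" and mz: "balanced_at r m z"
  shows "(\<Sum>x\<in>UNIV - {y}. m x * eliminate r z x y) =
    (\<Sum>x\<in>UNIV - {y}. m x * r x y) - m y * (r y z * r z y / hold_rate r z)"
proof -
  let ?l = "hold_rate r z" and ?U = "UNIV - {y, z}"
  have "m z * ?l = m y * r y z + (\<Sum>x\<in>?U. m x * r x z)"
    using mz sum_remove_two[of z y "\<lambda>x. m x * r x z"] yz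
    unfolding balanced_at_def by (simp add: insert_commute)
  then have Sz: "(\<Sum>x\<in>?U. m x * r x z) = m z * ?l - m y * r y z" by simp
  have "(\<Sum>x\<in>UNIV - {y}. m x * eliminate r z x y) =
      (\<Sum>x\<in>?U. m x * r x y + r z y / ?l * (m x * r x z))"
    using yz
      by (subst sum_remove_two[of y z]) (auto simp: eliminate_def algebra_simps intro!: sum.cong)
  also have "\<dots> = (\<Sum>x\<in>?U. m x * r x y) + r z y / ?l * (\<Sum>x\<in>?U. m x * r x z)"
    by (simp add: sum.distrib sum_distrib_left)
  also have "\<dots> = (\<Sum>x\<in>UNIV - {y}. m x * r x y) - m y * (r y z * r z y / ?l)"
    unfolding Sz sum_remove_two[OF yz, of "\<lambda>x. m x * r x y"] using l by (simp add: field_simps)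
  finally show ?thesis .
qed

lemma hold_rate_eliminate:
  fixes r :: "'a::finite \<Rightarrow> 'a \<Rightarrow> real"
  assumes "x \<noteq> z" and "hold_rate r z \<noteq> 0"
  shows "hold_rate (eliminate r z) x = hold_rate r x - r x z * r z x / hold_rate r z"
proof -
  have "harmonic_at r (\<lambda>_. 1) z" unfolding harmonic_at_def hold_rate_def by simp
  then show ?thesis
    using sum_eliminate_right[OF assms, of "\<lambda>_. 1"] unfolding hold_rate_def by simp
qed

lemma harmonic_at_eliminate_iff:
  fixes r :: "'a::finite \<Rightarrow> 'a \<Rightarrow> real"
  assumes "x \<noteq> z" and "hold_rate r z \<noteq> 0" and "harmonic_at r h z"
  shows "harmonic_at (eliminate r z) h x \<longleftrightarrow> harmonic_at r h x"
  unfolding harmonic_at_def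
    hold_rate_eliminate[OF assms(1,2)] sum_eliminate_right[OF assms] left_diff_distrib
  by linarith

lemma balanced_at_eliminate_iff:
  fixes r :: "'a::finite \<Rightarrow> 'a \<Rightarrow> real"
  assumes "y \<noteq> z" and "hold_rate r z \<noteq> 0" and "balanced_at r m z"
  shows "balanced_at (eliminate r z) m y \<longleftrightarrow> balanced_at r m y"
  unfolding balanced_at_def
    hold_rate_eliminate[OF assms(1,2)] sum_eliminate_left[OF assms] right_diff_distrib
  by linarith

lemma harmonic_at_extend:
  fixes r :: "'a::finite \<Rightarrow> 'a \<Rightarrow> real"
  assumes l: "hold_rate r z \<noteq> 0" and h: "x \<noteq> z \<Longrightarrow> harmonic_at (eliminate r z) h x"
  shows "harmonic_at r (h(z := (\<Sum>y\<in>UNIV - {z}. r z y * h y) / hold_rate r z)) x"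
    (is "harmonic_at r ?h x")
proof -
  have hz: "harmonic_at r ?h z"
    unfolding harmonic_at_def using l by (simp add: sum.cong[OF refl, of _ "\<lambda>y. r z y * ?h y"])
  show ?thesis
  proof (cases "x = z")
    case False
    have "(\<Sum>y\<in>UNIV - {x}. eliminate r z x y * ?h y) = (\<Sum>y\<in>UNIV - {x}. eliminate r z x y * h y)"
      by (rule sum.cong) (auto simp: eliminate_def)
    then have "harmonic_at (eliminate r z) ?h x"
      using h[OF False] False unfolding harmonic_at_def by simp
    then show ?thesis using harmonic_at_eliminate_iff[OF False l hz] by simp
  qed (use hz in simp)
qed

lemma balanced_at_extend:
  fixes r :: "'a::finite \<Rightarrow> 'a \<Rightarrow> real"
  assumes l: "hold_rate r z \<noteq> 0" and m: "y \<noteq> z \<Longrightarrow> balanced_at (eliminate r z) m y"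
  shows "balanced_at r (m(z := (\<Sum>x\<in>UNIV - {z}. m x * r x z) / hold_rate r z)) y"
    (is "balanced_at r ?m y")
proof -
  have mz: "balanced_at r ?m z"
    unfolding balanced_at_def using l by (simp add: sum.cong[OF refl, of _ "\<lambda>x. ?m x * r x z"])
  show ?thesis
  proof (cases "y = z")
    case False
    have "(\<Sum>x\<in>UNIV - {y}. ?m x * eliminate r z x y) = (\<Sum>x\<in>UNIV - {y}. m x * eliminate r z x y)"
      by (rule sum.cong) (auto simp: eliminate_def)
    then have "balanced_at (eliminate r z) ?m y"
      using m[OF False] False unfolding balanced_at_def by simp
    then show ?thesis using balanced_at_eliminate_iff[OF False l mz] by simp
  qed (use mz in simp)
qed

lemma eliminate_nonneg: "(\<And>a b. r a b \<ge> 0) \<Longrightarrow> eliminate r z a b \<ge> 0"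
  unfolding eliminate_def using hold_rate_nonneg[of r z] by simp

lemma jump_graph_eliminate:
  fixes r :: "'a::finite \<Rightarrow> 'a \<Rightarrow> real"
  assumes nn: "\<And>a b. r a b \<ge> 0" and "a \<noteq> z" "b \<noteq> z" "a \<noteq> b"
    and "(a, b) \<in> jump_graph r \<or> (a, z) \<in> jump_graph r \<and> (z, b) \<in> jump_graph r"
  shows "(a, b) \<in> jump_graph (eliminate r z)"
proof -
  have "r a b > 0 \<or> r a z * r z b / hold_rate r z > 0"
  proof (cases "(a, b) \<in> jump_graph r")
    case False
    then have "r a z > 0" "r z b > 0" using assms(5) unfolding jump_graph_def by auto
    moreover have "r z b \<le> hold_rate r z"
      unfolding hold_rate_def using \<open>b \<noteq> z\<close> by (intro member_le_sum nn) auto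
    ultimately show ?thesis by simp
  qed (simp add: jump_graph_def)
  then show ?thesis
    using assms(2-4) nn[of a b] nn[of a z] nn[of z b] hold_rate_nonneg[of r z, OF nn]
    unfolding jump_graph_def eliminate_def
    by (auto intro: add_pos_nonneg add_nonneg_pos)
qed

lemma rtrancl_jump_graph_eliminate:
  fixes r :: "'a::finite \<Rightarrow> 'a \<Rightarrow> real"
  assumes nn: "\<And>a b. r a b \<ge> 0" and path: "(x, y) \<in> (jump_graph r)\<^sup>*" and "x \<noteq> z" "y \<noteq> z"
  shows "(x, y) \<in> (jump_graph (eliminate r z))\<^sup>*"
proof -
  let ?G = "jump_graph r" and ?G' = "jump_graph (eliminate r z)"
  \<comment> \<open>from \<open>z\<close> itself remember the next state \<open>w\<close>, so that \<open>u \<rightarrow> z \<rightarrow> w\<close> becomes one jump\<close>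
  have "(u \<noteq> z \<longrightarrow> (u, y) \<in> ?G'\<^sup>*) \<and> (u = z \<longrightarrow> (\<exists>w. (z, w) \<in> ?G \<and> (w, y) \<in> ?G'\<^sup>*))"
    if "(u, y) \<in> ?G\<^sup>*" for u
    using that
  proof (induction rule: converse_rtrancl_induct)
    case base
    then show ?case using \<open>y \<noteq> z\<close> by auto
  next
    case (step u v)
    have uv: "u \<noteq> v" using step.hyps(1) unfolding jump_graph_def by auto
    show ?case
    proof (intro conjI impI)
      assume uz: "u \<noteq> z"
      show "(u, y) \<in> ?G'\<^sup>*"
      proof (cases "v = z")
        case False
        then have "(u, v) \<in> ?G'"
          using jump_graph_eliminate[where r = r and z = z, OF nn uz False uv] step.hyps(1) by blast
        then show ?thesis using step.IH False by (meson converse_rtrancl_into_rtrancl)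
      next
        case True
        then obtain w where w: "(z, w) \<in> ?G" "(w, y) \<in> ?G'\<^sup>*" using step.IH by auto
        show ?thesis
        proof (cases "u = w")
          case False
          have "w \<noteq> z" using w(1) unfolding jump_graph_def by auto
          then have "(u, w) \<in> ?G'"
            using jump_graph_eliminate[where r = r and z = z, OF nn uz _ False]
              step.hyps(1) True w(1) by blast
          then show ?thesis using w(2) by (meson converse_rtrancl_into_rtrancl)
        qed (use w in simp)
      qed
    next
      assume "u = z"
      then show "\<exists>w. (z, w) \<in> ?G \<and> (w, y) \<in> ?G'\<^sup>*" using step uv by auto
    qed
  qed
  then show ?thesis using path \<open>x \<noteq> z\<close> by blast
qed

section \<open>Escape probabilities\<close>

lemma hold_rate_mult_jump_prob:
  fixes r :: "'a::finite \<Rightarrow> 'a \<Rightarrow> real"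
  assumes nn: "\<And>x y. r x y \<ge> 0"
  shows "hold_rate r x * jump_prob r x y = (if x = y then 0 else r x y)"
proof (cases "hold_rate r x = 0")
  case True
  then have "\<forall>y\<in>UNIV - {x}. r x y = 0"
    unfolding hold_rate_def using sum_nonneg_eq_0_iff[of "UNIV - {x}" "r x"] nn by auto
  then show ?thesis using True by (auto simp: jump_prob_def)
qed (simp add: jump_prob_def)

lemma jump_prob_nonneg: "(\<And>x y. r x y \<ge> 0) \<Longrightarrow> jump_prob r x y \<ge> 0"
  unfolding jump_prob_def using hold_rate_nonneg[of r x] by auto

lemma sum_jump_prob_le_1:
  fixes r :: "'a::finite \<Rightarrow> 'a \<Rightarrow> real"
  shows "(\<Sum>y\<in>UNIV. jump_prob r x y) \<le> 1"
proof -
  have "(\<Sum>y\<in>UNIV. jump_prob r x y) = (\<Sum>y\<in>UNIV - {x}. r x y) / hold_rate r x"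
    by (simp add: sum.remove[of UNIV x] sum_divide_distrib jump_prob_def)
  then show ?thesis unfolding hold_rate_def by (cases "(\<Sum>y\<in>UNIV - {x}. r x y) = 0") simp_all
qed

definition escape_paths :: "'a set \<Rightarrow> 'a set \<Rightarrow> nat \<Rightarrow> 'a list set" where
  "escape_paths A B k = {xs. length xs = Suc k \<and> last xs \<in> B - A \<and> (\<forall>i<k. xs ! i \<notin> A \<union> B)}"

text \<open>The probability that the jump chain started at \<open>x\<close> enters \<open>A \<union> B\<close> for the first time
  after \<open>k + 1\<close> jumps, and does so in \<open>B - A\<close>.\<close>
definition escape_weight :: "('a::finite \<Rightarrow> 'a \<Rightarrow> real) \<Rightarrow> 'a set \<Rightarrow> 'a set \<Rightarrow> nat \<Rightarrow> 'a \<Rightarrow> real" where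
  "escape_weight r A B k x = (\<Sum>xs\<in>escape_paths A B k. path_weight (jump_prob r) x xs)"

lemma escape_prob_eq_suminf:
  "escape_prob r A B x = (if x \<in> B then 1 else (\<Sum>k. escape_weight r A B k x))"
  unfolding escape_prob_def escape_weight_def escape_paths_def by simp

lemma escape_paths_0: "escape_paths A B 0 = (\<lambda>y. [y]) ` (B - A)"
  unfolding escape_paths_def by (auto simp: length_Suc_conv)

lemma Cons_in_escape_paths_Suc:
  "y # ys \<in> escape_paths A B (Suc k) \<longleftrightarrow> y \<notin> A \<union> B \<and> ys \<in> escape_paths A B k"
  unfolding escape_paths_def by (cases ys) (auto simp: less_Suc_eq_0_disj)

lemma escape_paths_Suc:
  "escape_paths A B (Suc k) = (\<lambda>(y, ys). y # ys) ` ((UNIV - (A \<union> B)) \<times> escape_paths A B k)"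
proof (intro set_eqI iffI)
  fix xs assume xs: "xs \<in> escape_paths A B (Suc k)"
  then obtain y ys where "xs = y # ys" unfolding escape_paths_def by (cases xs) auto
  with xs show "xs \<in> (\<lambda>(y, ys). y # ys) ` ((UNIV - (A \<union> B)) \<times> escape_paths A B k)"
    by (auto simp: Cons_in_escape_paths_Suc)
qed (auto simp: Cons_in_escape_paths_Suc)

lemma escape_weight_0: "escape_weight r A B 0 x = (\<Sum>y\<in>B - A. jump_prob r x y)"
  unfolding escape_weight_def escape_paths_0 by (subst sum.reindex) (auto simp: inj_on_def)

lemma escape_weight_Suc:
  "escape_weight r A B (Suc k) x = (\<Sum>y\<in>UNIV - (A \<union> B). jump_prob r x y * escape_weight r A B k y)"
proof -
  have "inj_on (\<lambda>(y, ys). y # ys) ((UNIV - (A \<union> B)) \<times> escape_paths A B k)"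
    by (auto simp: inj_on_def)
  then have "escape_weight r A B (Suc k) x =
      (\<Sum>(y, ys)\<in>(UNIV - (A \<union> B)) \<times> escape_paths A B k. path_weight (jump_prob r) x (y # ys))"
    unfolding escape_weight_def escape_paths_Suc
      by (subst sum.reindex) (auto simp: case_prod_unfold)
  also have "\<dots> = (\<Sum>y\<in>UNIV - (A \<union> B). jump_prob r x y * escape_weight r A B k y)"
    unfolding escape_weight_def by (simp add: sum.cartesian_product[symmetric] sum_distrib_left)
  finally show ?thesis .
qed

lemma escape_weight_nonneg: "(\<And>x y. r x y \<ge> 0) \<Longrightarrow> escape_weight r A B k x \<ge> 0"
  by (induction k arbitrary: x)
    (auto simp: escape_weight_0 escape_weight_Suc
      intro!: sum_nonneg mult_nonneg_nonneg jump_prob_nonneg)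

lemma sum_escape_weight_le_1:
  fixes r :: "'a::finite \<Rightarrow> 'a \<Rightarrow> real"
  assumes nn: "\<And>x y. r x y \<ge> 0"
  shows "(\<Sum>k<n. escape_weight r A B k x) \<le> 1"
proof (induction n arbitrary: x)
  case (Suc n)
  have "(\<Sum>k<Suc n. escape_weight r A B k x) =
      (\<Sum>y\<in>B - A. jump_prob r x y) +
      (\<Sum>y\<in>UNIV - (A \<union> B). jump_prob r x y * (\<Sum>k<n. escape_weight r A B k y))"
    unfolding sum.lessThan_Suc_shift escape_weight_0 escape_weight_Suc sum_distrib_left
    by (subst sum.swap) simp
  also have "\<dots> \<le> (\<Sum>y\<in>B - A. jump_prob r x y) + (\<Sum>y\<in>UNIV - (A \<union> B). jump_prob r x y)"
    by (intro add_left_mono sum_mono mult_left_le jump_prob_nonneg Suc nn)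
  also have "\<dots> = (\<Sum>y\<in>(B - A) \<union> (UNIV - (A \<union> B)). jump_prob r x y)"
    by (rule sum.union_disjoint[symmetric]) auto
  also have "\<dots> \<le> (\<Sum>y\<in>UNIV. jump_prob r x y)"
    by (intro sum_mono2 jump_prob_nonneg nn) auto
  also have "\<dots> \<le> 1" by (rule sum_jump_prob_le_1)
  finally show ?case .
qed simp

lemma summable_escape_weight:
  fixes r :: "'a::finite \<Rightarrow> 'a \<Rightarrow> real"
  assumes nn: "\<And>x y. r x y \<ge> 0"
  shows "summable (\<lambda>k. escape_weight r A B k x)"
proof (rule bounded_imp_summable)
  show "0 \<le> escape_weight r A B n x" for n by (rule escape_weight_nonneg[OF nn])
  show "(\<Sum>k\<le>n. escape_weight r A B k x) \<le> 1" for n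
    using sum_escape_weight_le_1[OF nn, where n = "Suc n"] by (simp add: lessThan_Suc_atMost)
qed

lemma escape_prob_step:
  fixes r :: "'a::finite \<Rightarrow> 'a \<Rightarrow> real"
  assumes nn: "\<And>x y. r x y \<ge> 0" and AB: "A \<inter> B = {}" and "x \<notin> B"
  shows "escape_prob r A B x =
    (\<Sum>y\<in>UNIV. jump_prob r x y * (if y \<in> A then 0 else escape_prob r A B y))"
proof -
  define \<Phi> where "\<Phi> y = (\<Sum>k. escape_weight r A B k y)" for y
  have sm: "summable (\<lambda>k. escape_weight r A B k y)" for y by (rule summable_escape_weight[OF nn])
  have "\<Phi> x = escape_weight r A B 0 x + (\<Sum>k. escape_weight r A B (Suc k) x)"
    unfolding \<Phi>_def using suminf_split_head[OF sm[of x]] by simp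
  also have "(\<Sum>k. escape_weight r A B (Suc k) x) = (\<Sum>y\<in>UNIV - (A \<union> B). jump_prob r x y * \<Phi> y)"
    unfolding escape_weight_Suc \<Phi>_def
    by (subst suminf_sum) (auto intro: summable_mult sm simp: suminf_mult[OF sm])
  finally have \<Phi>x: "\<Phi> x = (\<Sum>y\<in>B - A. jump_prob r x y) + (\<Sum>y\<in>UNIV - (A \<union> B). jump_prob r x y * \<Phi> y)"
    unfolding escape_weight_0 .
  define g where "g y = (if y \<in> A then 0 else escape_prob r A B y)" for y
  have "(\<Sum>y\<in>UNIV. jump_prob r x y * g y) = (\<Sum>y\<in>(B - A) \<union> (UNIV - (A \<union> B)). jump_prob r x y * g y)"
    by (rule sum.mono_neutral_right) (auto simp: g_def)
  also have "\<dots> = (\<Sum>y\<in>B - A. jump_prob r x y * g y) + (\<Sum>y\<in>UNIV - (A \<union> B). jump_prob r x y * g y)"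
    by (rule sum.union_disjoint) auto
  also have "\<dots> = \<Phi> x"
    unfolding \<Phi>x using AB by (simp add: g_def escape_prob_eq_suminf \<Phi>_def disjoint_iff)
  finally show ?thesis using \<open>x \<notin> B\<close> unfolding g_def \<Phi>_def escape_prob_eq_suminf[of r A B x] by simp
qed

lemma hold_rate_mult_escape_prob:
  fixes r :: "'a::finite \<Rightarrow> 'a \<Rightarrow> real"
  assumes nn: "\<And>x y. r x y \<ge> 0" and AB: "A \<inter> B = {}" and "x \<notin> B"
  shows "hold_rate r x * escape_prob r A B x =
    (\<Sum>y\<in>UNIV - {x}. r x y * (if y \<in> A then 0 else escape_prob r A B y))"
proof -
  have "hold_rate r x * escape_prob r A B x =
      (\<Sum>y\<in>UNIV. (hold_rate r x * jump_prob r x y) * (if y \<in> A then 0 else escape_prob r A B y))"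
    unfolding escape_prob_step[OF nn AB \<open>x \<notin> B\<close>] sum_distrib_left by (simp add: mult.assoc)
  also have "\<dots> = (\<Sum>y\<in>UNIV - {x}. r x y * (if y \<in> A then 0 else escape_prob r A B y))"
    unfolding hold_rate_mult_jump_prob[OF nn] by (simp add: sum.remove[of UNIV x])
  finally show ?thesis .
qed

section \<open>Maximum principle and uniqueness\<close>

lemma harmonic_at_abs_max:
  fixes r :: "'a::finite \<Rightarrow> 'a \<Rightarrow> real"
  assumes nn: "\<And>x y. r x y \<ge> 0" and w: "harmonic_at r w x" and max: "\<And>y. \<bar>w y\<bar> \<le> \<bar>w x\<bar>"
    and edge: "(x, y) \<in> jump_graph r"
  shows "\<bar>w y\<bar> = \<bar>w x\<bar>"
proof -
  let ?M = "\<bar>w x\<bar>"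
  have "hold_rate r x * ?M = \<bar>hold_rate r x * w x\<bar>"
    using hold_rate_nonneg[of r x, OF nn] by (simp add: abs_mult)
  also have "\<dots> = \<bar>\<Sum>y\<in>UNIV - {x}. r x y * w y\<bar>" using w unfolding harmonic_at_def by simp
  also have "\<dots> \<le> (\<Sum>y\<in>UNIV - {x}. r x y * \<bar>w y\<bar>)"
    by (rule order_trans[OF sum_abs]) (simp add: abs_mult nn)
  finally have "(\<Sum>y\<in>UNIV - {x}. r x y * (?M - \<bar>w y\<bar>)) \<le> 0"
    unfolding hold_rate_def by (simp add: right_diff_distrib sum_subtractf sum_distrib_right)
  moreover have nonneg: "r x y * (?M - \<bar>w y\<bar>) \<ge> 0" for y using max nn by simp
  moreover have "(\<Sum>y\<in>UNIV - {x}. r x y * (?M - \<bar>w y\<bar>)) \<ge> 0"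
    by (intro sum_nonneg nonneg)
  ultimately have "(\<Sum>y\<in>UNIV - {x}. r x y * (?M - \<bar>w y\<bar>)) = 0" by linarith
  then have "\<forall>y\<in>UNIV - {x}. r x y * (?M - \<bar>w y\<bar>) = 0"
    by (subst (asm) sum_nonneg_eq_0_iff) (simp_all add: nonneg)
  moreover have "y \<in> UNIV - {x}" "r x y > 0" using edge unfolding jump_graph_def by auto
  ultimately show ?thesis by force
qed

lemma harmonic_unique:
  fixes r :: "'a::finite \<Rightarrow> 'a \<Rightarrow> real"
  assumes nn: "\<And>x y. r x y \<ge> 0"
    and reach: "\<And>x. x \<in> D \<Longrightarrow> \<exists>y. y \<notin> D \<and> (x, y) \<in> (jump_graph r)\<^sup>*"
    and eq: "\<And>x. x \<notin> D \<Longrightarrow> u x = v x"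
    and hu: "\<And>x. x \<in> D \<Longrightarrow> harmonic_at r u x" and hv: "\<And>x. x \<in> D \<Longrightarrow> harmonic_at r v x"
  shows "u = v"
proof -
  define w where "w x = u x - v x" for x
  have w0: "w x = 0" if "x \<notin> D" for x using eq that unfolding w_def by simp
  have hw: "harmonic_at r w x" if "x \<in> D" for x
    using hu[OF that] hv[OF that] unfolding w_def harmonic_at_def
    by (simp add: right_diff_distrib sum_subtractf)
  have "Max (range (\<lambda>x. \<bar>w x\<bar>)) \<in> range (\<lambda>x. \<bar>w x\<bar>)" by (rule Max_in) auto
  then obtain x0 where "\<bar>w x0\<bar> = Max (range (\<lambda>x. \<bar>w x\<bar>))" by (metis imageE)
  then have max: "\<bar>w y\<bar> \<le> \<bar>w x0\<bar>" for y by simp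
  have "w x0 = 0"
  proof (rule ccontr)
    assume nz: "w x0 \<noteq> 0"
    have reached: "\<bar>w y\<bar> = \<bar>w x0\<bar>" if "(x0, y) \<in> (jump_graph r)\<^sup>*" for y
      using that
    proof (induction rule: rtrancl_induct)
      case (step y z)
      then have "y \<in> D" using w0 nz by force
      moreover have "\<bar>w y'\<bar> \<le> \<bar>w y\<bar>" for y' using max step.IH by simp
      ultimately show ?case
        using harmonic_at_abs_max[where r = r, OF nn hw, of y z] step by simp
    qed simp
    have "x0 \<in> D" using w0 nz by blast
    then obtain y where "y \<notin> D" "(x0, y) \<in> (jump_graph r)\<^sup>*" using reach by blast
    then show False using reached[of y] w0[of y] nz by simp
  qed
  then have "u x = v x" for x using max[of x] unfolding w_def by simp
  then show ?thesis by (rule ext)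
qed

lemma sum_off_diagonal_swap:
  fixes f :: "'a::finite \<Rightarrow> 'a \<Rightarrow> real"
  shows "(\<Sum>y\<in>UNIV. \<Sum>x\<in>UNIV - {y}. f x y) = (\<Sum>x\<in>UNIV. \<Sum>y\<in>UNIV - {x}. f x y)"
proof -
  have "(\<Sum>y\<in>UNIV. \<Sum>x\<in>UNIV - {y}. f x y) = (\<Sum>y\<in>UNIV. \<Sum>x\<in>UNIV. f x y) - (\<Sum>y\<in>UNIV. f y y)"
    by (simp add: sum_diff1 sum_subtractf)
  also have "(\<Sum>y\<in>UNIV. \<Sum>x\<in>UNIV. f x y) = (\<Sum>x\<in>UNIV. \<Sum>y\<in>UNIV. f x y)"
    by (rule sum.swap)
  also have "\<dots> - (\<Sum>y\<in>UNIV. f y y) = (\<Sum>x\<in>UNIV. \<Sum>y\<in>UNIV - {x}. f x y)"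
    by (simp add: sum_diff1 sum_subtractf)
  finally show ?thesis .
qed

lemma balanced_at_pos_part:
  fixes r :: "'a::finite \<Rightarrow> 'a \<Rightarrow> real"
  assumes nn: "\<And>x y. r x y \<ge> 0" and v: "\<And>y. balanced_at r v y"
  shows "balanced_at r (\<lambda>x. max (v x) 0) y"
proof -
  define p where "p x = max (v x) 0" for x
  have ge: "(\<Sum>x\<in>UNIV - {y}. p x * r x y) \<ge> p y * hold_rate r y" for y
  proof (cases "v y \<le> 0")
    case True
    then show ?thesis unfolding p_def by (auto intro!: sum_nonneg mult_nonneg_nonneg nn)
  next
    case False
    then have "p y * hold_rate r y = (\<Sum>x\<in>UNIV - {y}. v x * r x y)"
      using v[of y] unfolding p_def balanced_at_def by simp
    also have "\<dots> \<le> (\<Sum>x\<in>UNIV - {y}. p x * r x y)"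
      by (rule sum_mono, rule mult_right_mono) (simp_all add: p_def nn)
    finally show ?thesis .
  qed
  \<comment> \<open>summed over \<open>y\<close>, both sides of these inequalities agree, so each is an equality\<close>
  have "(\<Sum>y\<in>UNIV. (\<Sum>x\<in>UNIV - {y}. p x * r x y) - p y * hold_rate r y) = 0"
    unfolding sum_subtractf sum_off_diagonal_swap[of "\<lambda>x y. p x * r x y"] hold_rate_def
    by (simp add: sum_distrib_left)
  then have "(\<Sum>x\<in>UNIV - {y}. p x * r x y) - p y * hold_rate r y = 0"
    using sum_nonneg_0[of UNIV "\<lambda>y. (\<Sum>x\<in>UNIV - {y}. p x * r x y) - p y * hold_rate r y" y] ge
    by simp
  then show ?thesis unfolding balanced_at_def p_def by simp
qed

lemma balanced_at_zero_backward:
  fixes r :: "'a::finite \<Rightarrow> 'a \<Rightarrow> real"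
  assumes nn: "\<And>x y. r x y \<ge> 0" and m: "\<And>x. m x \<ge> 0"
    and "balanced_at r m y" "m y = 0" and edge: "(x, y) \<in> jump_graph r"
  shows "m x = 0"
proof -
  have "(\<Sum>x\<in>UNIV - {y}. m x * r x y) = 0" using assms(3,4) unfolding balanced_at_def by simp
  then have "\<forall>x\<in>UNIV - {y}. m x * r x y = 0"
    by (subst (asm) sum_nonneg_eq_0_iff) (auto intro: mult_nonneg_nonneg m nn)
  then show ?thesis using edge unfolding jump_graph_def by auto
qed

text \<open>The positive part of \<open>m1 - m2\<close> is again balanced; it vanishes somewhere because
  \<open>m1 - m2\<close> has total mass 0, hence everywhere by irreducibility.\<close>
lemma invariant_prob_le:
  fixes r :: "'a::finite \<Rightarrow> 'a \<Rightarrow> real"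
  assumes nn: "\<And>x y. r x y \<ge> 0" and irr: "\<And>x y. (x, y) \<in> (jump_graph r)\<^sup>*"
    and m1: "invariant_prob r m1" and m2: "invariant_prob r m2"
  shows "m1 x \<le> m2 x"
proof -
  define v where "v x = m1 x - m2 x" for x
  define p where "p x = max (v x) 0" for x
  have "balanced_at r v y" for y
    using m1 m2 unfolding invariant_prob_def balanced_at_def v_def
    by (simp add: left_diff_distrib sum_subtractf)
  then have p: "balanced_at r p y" for y unfolding p_def
    by (rule balanced_at_pos_part[where r = r, OF nn])
  have "sum v UNIV = 0" using m1 m2 unfolding invariant_prob_def v_def by (simp add: sum_subtractf)
  have "\<exists>y. v y \<le> 0"
  proof (rule ccontr)
    assume "\<nexists>y. v y \<le> 0"
    then have "v y > 0" for y by (meson not_le)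
    then have "sum v UNIV > 0" by (simp add: sum_pos)
    with \<open>sum v UNIV = 0\<close> show False by simp
  qed
  then obtain y where "v y \<le> 0" by blast
  then have "p y = 0" unfolding p_def by simp
  have "p x = 0" if "(x, y) \<in> (jump_graph r)\<^sup>*" for x
    using that
  proof (induction rule: converse_rtrancl_induct)
    case (step x x')
    then show ?case using balanced_at_zero_backward[where r = r, OF nn _ p] by (simp add: p_def)
  qed (fact \<open>p y = 0\<close>)
  then have "p x = 0" using irr by blast
  then show ?thesis unfolding p_def v_def by (simp add: max_def split: if_splits)
qed

lemma invariant_prob_unique:
  fixes r :: "'a::finite \<Rightarrow> 'a \<Rightarrow> real"
  assumes "\<And>x y. r x y \<ge> 0" "\<And>x y. (x, y) \<in> (jump_graph r)\<^sup>*"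
    and "invariant_prob r m1" "invariant_prob r m2"
  shows "m1 = m2"
  using invariant_prob_le[where r = r, OF assms] invariant_prob_le[where r = r, OF assms(1,2,4,3)]
    by (simp add: antisym ext)

lemma harmonic_exit_edge:
  fixes r :: "'a::finite \<Rightarrow> 'a \<Rightarrow> real"
  assumes nn: "\<And>x y. r x y \<ge> 0" and AB: "A \<inter> B = {}"
    and a: "a \<in> A" and b: "b \<in> B" and path: "(a, b) \<in> (jump_graph r)\<^sup>*"
    and h: "\<And>y. h y \<ge> 0" and hB: "\<And>y. y \<in> B \<Longrightarrow> h y = 1"
    and harm: "\<And>x. x \<notin> A \<union> B \<Longrightarrow> harmonic_at r h x"
  shows "\<exists>e\<in>A. \<exists>y. y \<notin> A \<and> (e, y) \<in> jump_graph r \<and> h y > 0"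
proof -
  let ?exit = "\<exists>e\<in>A. \<exists>y. y \<notin> A \<and> (e, y) \<in> jump_graph r \<and> h y > 0"
  have "(u \<notin> A \<and> h u > 0) \<or> ?exit" if "(u, b) \<in> (jump_graph r)\<^sup>*" for u
    using that
  proof (induction rule: converse_rtrancl_induct)
    case base
    then show ?case using b AB hB[OF b] by auto
  next
    case (step x w)
    show ?case
    proof (rule disjCI)
      assume "\<not> ?exit"
      then have w: "w \<notin> A" "h w > 0" using step.IH by auto
      then have xA: "x \<notin> A" using step.hyps(1) \<open>\<not> ?exit\<close> by blast
      have "h x > 0"
      proof (cases "x \<in> B")
        case False
        have xw: "x \<noteq> w" "r x w > 0" using step.hyps(1) unfolding jump_graph_def by auto
        have "0 < r x w * h w" using xw w by simp
        also have "\<dots> \<le> (\<Sum>y\<in>UNIV - {x}. r x y * h y)"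
          by (rule member_le_sum) (use xw in \<open>auto intro: mult_nonneg_nonneg nn h\<close>)
        also have "\<dots> = hold_rate r x * h x" using harm xA False unfolding harmonic_at_def by simp
        finally show ?thesis
          using h[of x] hold_rate_nonneg[of r x, OF nn] by (simp add: zero_less_mult_iff)
      qed (simp add: hB)
      then show "x \<notin> A \<and> h x > 0" using xA by simp
    qed
  qed
  then show ?thesis using path a by blast
qed

lemma harmonic_flow_pos:
  fixes r :: "'a::finite \<Rightarrow> 'a \<Rightarrow> real"
  assumes nn: "\<And>x y. r x y \<ge> 0" and AB: "A \<inter> B = {}"
    and a: "a \<in> A" and b: "b \<in> B" and path: "(a, b) \<in> (jump_graph r)\<^sup>*"
    and h: "\<And>y. h y \<ge> 0" and hB: "\<And>y. y \<in> B \<Longrightarrow> h y = 1"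
    and harm: "\<And>x. x \<notin> A \<union> B \<Longrightarrow> harmonic_at r h x" and \<mu>: "\<And>x. \<mu> x > 0"
  shows "(\<Sum>e\<in>A. \<mu> e * (\<Sum>y\<in>UNIV - {e}. r e y * h y)) > 0"
proof -
  obtain e y where e: "e \<in> A" "(e, y) \<in> jump_graph r" "h y > 0"
    using harmonic_exit_edge[where r = r and h = h, OF nn AB a b path h hB harm] by blast
  then have "y \<noteq> e" "r e y > 0" unfolding jump_graph_def by auto
  have terms: "0 \<le> r x y' * h y'" for x y' by (intro mult_nonneg_nonneg nn h)
  have "0 < r e y * h y" using \<open>r e y > 0\<close> e(3) by simp
  also have "\<dots> \<le> (\<Sum>y\<in>UNIV - {e}. r e y * h y)"
    by (rule member_le_sum) (simp_all add: \<open>y \<noteq> e\<close> terms)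
  finally have "0 < \<mu> e * (\<Sum>y\<in>UNIV - {e}. r e y * h y)" using \<mu>[of e] by simp
  moreover have "0 \<le> \<mu> e' * (\<Sum>y\<in>UNIV - {e'}. r e' y * h y)" for e'
    using \<mu>[of e'] by (intro mult_nonneg_nonneg sum_nonneg terms) simp_all
  ultimately show ?thesis using e(1) by (intro sum_pos2[of _ e]) simp_all
qed

lemma escape_prob_eq_harmonic:
  fixes r :: "'a::finite \<Rightarrow> 'a \<Rightarrow> real"
  assumes nn: "\<And>x y. r x y \<ge> 0" and AB: "A \<inter> B = {}"
    and reach: "\<And>x. x \<notin> A \<union> B \<Longrightarrow> \<exists>y\<in>A \<union> B. (x, y) \<in> (jump_graph r)\<^sup>*"
    and hA: "\<And>x. x \<in> A \<Longrightarrow> h x = 0" and hB: "\<And>x. x \<in> B \<Longrightarrow> h x = 1"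
    and harm: "\<And>x. x \<notin> A \<union> B \<Longrightarrow> harmonic_at r h x"
  shows "(\<lambda>y. if y \<in> A then 0 else escape_prob r A B y) = h"
proof (rule harmonic_unique[where r = r, OF nn, of "- (A \<union> B)"])
  fix x assume "x \<in> - (A \<union> B)"
  then show "\<exists>y. y \<notin> - (A \<union> B) \<and> (x, y) \<in> (jump_graph r)\<^sup>*" using reach[of x] by blast
next
  fix x assume "x \<in> - (A \<union> B)"
  then show "harmonic_at r (\<lambda>y. if y \<in> A then 0 else escape_prob r A B y) x"
    using hold_rate_mult_escape_prob[where r = r, OF nn AB, of x] unfolding harmonic_at_def by simp
qed (use hA hB harm AB in \<open>auto simp: escape_prob_def\<close>)

lemma capacity_eq_harmonic:
  fixes r :: "'a::finite \<Rightarrow> 'a \<Rightarrow> real"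
  assumes nn: "\<And>x y. r x y \<ge> 0" and AB: "A \<inter> B = {}"
    and reach: "\<And>x. x \<notin> A \<union> B \<Longrightarrow> \<exists>y\<in>A \<union> B. (x, y) \<in> (jump_graph r)\<^sup>*"
    and hA: "\<And>x. x \<in> A \<Longrightarrow> h x = 0" and hB: "\<And>x. x \<in> B \<Longrightarrow> h x = 1"
    and harm: "\<And>x. x \<notin> A \<union> B \<Longrightarrow> harmonic_at r h x"
  shows "capacity r A B = (\<Sum>e\<in>A. inv_meas r e * (\<Sum>y\<in>UNIV - {e}. r e y * h y))"
proof -
  have esc: "(if y \<in> A then 0 else escape_prob r A B y) = h y" for y
    using escape_prob_eq_harmonic[where r = r, OF assms] by (rule fun_cong)
  have "hold_rate r e * escape_prob r A B e = (\<Sum>y\<in>UNIV - {e}. r e y * h y)" if "e \<in> A" for e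
    using that AB hold_rate_mult_escape_prob[where r = r, OF nn AB, of e] unfolding esc by blast
  then show ?thesis unfolding capacity_def mult.assoc by simp
qed

lemma recurrent_classes_nonempty: "C \<in> recurrent_classes R \<Longrightarrow> C \<noteq> {}"
  unfolding recurrent_classes_def reachable_def by blast

lemma recurrent_classes_disjoint:
  assumes "C \<in> recurrent_classes R" "C' \<in> recurrent_classes R" "C \<noteq> C'"
  shows "C \<inter> C' = {}"
proof -
  obtain x x' where x: "C = {y. reachable R x y \<and> reachable R y x}"
    and x': "C' = {y. reachable R x' y \<and> reachable R y x'}"
    using assms(1,2) unfolding recurrent_classes_def by blast
  have trans: "reachable R u w" if "reachable R u v" "reachable R v w" for u v w
    using that unfolding reachable_def by (rule rtrancl_trans)
  show ?thesis
  proof (rule ccontr)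
    assume "C \<inter> C' \<noteq> {}"
    then have "reachable R x x'" "reachable R x' x" using x x' trans by blast+
    then have "C = C'" unfolding x x' using trans by blast
    then show False using assms(3) by simp
  qed
qed

section \<open>Tame sequences\<close>

locale rate_asymptotics =
  fixes RN :: "nat \<Rightarrow> 'a::finite \<Rightarrow> 'a \<Rightarrow> real"
  assumes nonneg: "\<And>N x y. RN N x y \<ge> 0" and A: "assumption_A RN"
begin

abbreviation edges :: "('a \<times> 'a) set" where
  "edges \<equiv> jump_graph (RN 0)"

definition edge_exponent :: "('a \<times> 'a \<Rightarrow> nat) \<Rightarrow> bool" where
  "edge_exponent k \<longleftrightarrow> (\<forall>p. p \<notin> edges \<longrightarrow> k p = 0)"

definition degree :: "('a \<times> 'a \<Rightarrow> nat) \<Rightarrow> nat" where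
  "degree k = sum k edges"

definition monomial :: "('a \<times> 'a \<Rightarrow> nat) \<Rightarrow> nat \<Rightarrow> real" where
  "monomial k N = (\<Prod>p\<in>edges. RN N (fst p) (snd p) ^ k p)"

definition monomial_quotient :: "('a \<times> 'a \<Rightarrow> nat) \<Rightarrow> ('a \<times> 'a \<Rightarrow> nat) \<Rightarrow> nat \<Rightarrow> real" where
  "monomial_quotient k l N = monomial k N / monomial l N"

definition tame :: "int \<Rightarrow> (nat \<Rightarrow> real) \<Rightarrow> bool" where
  "tame d f \<longleftrightarrow> (\<forall>N. f N > 0) \<and>
     (\<exists>k l c. edge_exponent k \<and> edge_exponent l \<and> int (degree k) - int (degree l) = d \<and> c > 0 \<and>
        (\<lambda>N. f N / monomial_quotient k l N) \<longlonglongrightarrow> c)"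

definition tame_or_zero :: "int \<Rightarrow> (nat \<Rightarrow> real) \<Rightarrow> bool" where
  "tame_or_zero d f \<longleftrightarrow> f = (\<lambda>N. 0) \<or> tame d f"

lemma rate_zero_or_pos: "x \<noteq> y \<Longrightarrow> (\<forall>N. RN N x y = 0) \<or> (\<forall>N. RN N x y > 0)"
  using A unfolding assumption_A_def by blast

lemma jump_graph_RN: "jump_graph (RN N) = edges"
  unfolding jump_graph_def using rate_zero_or_pos by fastforce

lemma edge_rate_pos: "p \<in> edges \<Longrightarrow> RN N (fst p) (snd p) > 0"
  using jump_graph_RN[of N] unfolding jump_graph_def by auto

lemma monomial_pos: "monomial k N > 0"
  unfolding monomial_def by (intro prod_pos ballI zero_less_power edge_rate_pos)

lemma monomial_quotient_pos: "monomial_quotient k l N > 0"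
  unfolding monomial_quotient_def using monomial_pos by simp

lemma monomial_add: "monomial (\<lambda>p. k p + l p) N = monomial k N * monomial l N"
  unfolding monomial_def by (simp add: power_add prod.distrib)

lemma degree_add: "degree (\<lambda>p. k p + l p) = degree k + degree l"
  unfolding degree_def by (simp add: sum.distrib)

lemma edge_exponent_add: "edge_exponent k \<Longrightarrow> edge_exponent l \<Longrightarrow> edge_exponent (\<lambda>p. k p + l p)"
  unfolding edge_exponent_def by simp

lemma has_extended_limit_monomial_ratio:
  assumes k: "edge_exponent k" and l: "edge_exponent l" and deg: "degree k = degree l"
  shows "has_extended_limit (\<lambda>N. monomial k N / monomial l N)"
proof (cases "k = l")
  case True
  have "monomial l N \<noteq> 0" for N using monomial_pos[of l N] by simp
  then show ?thesis
    using True unfolding has_extended_limit_def by (auto intro!: exI[of _ 1])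
next
  case False
  have "degree k \<noteq> 0"
  proof
    assume "degree k = 0"
    then have "\<forall>p\<in>edges. k p = 0 \<and> l p = 0" using deg unfolding degree_def by simp
    then have "k = l" using k l unfolding edge_exponent_def by (metis ext)
    then show False using False by simp
  qed
  then have "degree k \<ge> 1" by simp
  with A have "ordered_family
      {j. (\<forall>p. p \<notin> edges \<longrightarrow> j p = 0) \<and> sum j edges = degree k}
      (\<lambda>j N. \<Prod>p\<in>edges. RN N (fst p) (snd p) ^ j p)"
    unfolding assumption_A_def by (elim conjE) (drule spec[of _ "degree k"], simp)
  then have "convergent (\<lambda>N. arctan (monomial k N / monomial l N))"
    using k l deg False
    unfolding ordered_family_def edge_exponent_def degree_def monomial_def by auto
  then show ?thesis using monomial_pos
    by (subst has_extended_limit_iff_convergent_arctan) simp_all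
qed

lemma monomial_quotient_ratio:
  "monomial_quotient k l N / monomial_quotient k' l' N =
     monomial (\<lambda>p. k p + l' p) N / monomial (\<lambda>p. k' p + l p) N"
  unfolding monomial_quotient_def monomial_add
  using monomial_pos[of l N] monomial_pos[of l' N] monomial_pos[of k' N] by (simp add: field_simps)

lemma has_extended_limit_monomial_quotient_ratio:
  assumes "edge_exponent k" "edge_exponent l" "edge_exponent k'" "edge_exponent l'"
    and "int (degree k) - int (degree l) = int (degree k') - int (degree l')"
  shows "has_extended_limit (\<lambda>N. monomial_quotient k l N / monomial_quotient k' l' N)"
  unfolding monomial_quotient_ratio
  by (rule has_extended_limit_monomial_ratio)
    (use assms in \<open>auto simp: edge_exponent_add degree_add\<close>)

lemma tameI:
  assumes "\<And>N. f N > 0" "edge_exponent k" "edge_exponent l" "int (degree k) - int (degree l) = d"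
    "c > 0" "(\<lambda>N. f N / monomial_quotient k l N) \<longlonglongrightarrow> c"
  shows "tame d f"
  using assms unfolding tame_def by blast

lemma tameE:
  assumes "tame d f"
  obtains k l c where "edge_exponent k" "edge_exponent l" "int (degree k) - int (degree l) = d"
    "c > 0" "(\<lambda>N. f N / monomial_quotient k l N) \<longlonglongrightarrow> c"
  using assms unfolding tame_def by blast

lemma tame_pos: "tame d f \<Longrightarrow> f N > 0"
  unfolding tame_def by blast

lemma tame_has_extended_limit_ratio:
  assumes f: "tame d f" and g: "tame d g"
  shows "has_extended_limit (\<lambda>N. f N / g N)"
proof -
  obtain k l c where
    k: "edge_exponent k" "edge_exponent l" "int (degree k) - int (degree l) = d"
    "c > 0" "(\<lambda>N. f N / monomial_quotient k l N) \<longlonglongrightarrow> c" using f by (rule tameE)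
  obtain k' l' c' where
    k': "edge_exponent k'" "edge_exponent l'" "int (degree k') - int (degree l') = d"
    "c' > 0" "(\<lambda>N. g N / monomial_quotient k' l' N) \<longlonglongrightarrow> c'" using g by (rule tameE)
  let ?q = "monomial_quotient k l" and ?q' = "monomial_quotient k' l'"
  have eq: "f N / g N = inverse (g N / ?q' N) * ((f N / ?q N) * (?q N / ?q' N))" for N
    using monomial_quotient_pos[of k l N] monomial_quotient_pos[of k' l' N] tame_pos[OF g, of N]
    by (simp add: field_simps)
  have "has_extended_limit (\<lambda>N. ?q N / ?q' N)"
    by (rule has_extended_limit_monomial_quotient_ratio) (use k k' in simp_all)
  then have "has_extended_limit (\<lambda>N. (f N / ?q N) * (?q N / ?q' N))"
    by (rule has_extended_limit_mult_tendsto[OF _ k(5,4)])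
  then show ?thesis
    unfolding eq
      by (rule has_extended_limit_mult_tendsto[OF _ tendsto_inverse[OF k'(5)]]) (use k' in auto)
qed

lemma tame_const_one: "tame 0 (\<lambda>N. 1)"
  by (rule tameI[of _ "\<lambda>_. 0" "\<lambda>_. 0" _ 1])
    (auto simp: edge_exponent_def degree_def monomial_quotient_def monomial_def)

lemma tame_rate:
  assumes xy: "(x, y) \<in> edges"
  shows "tame 1 (\<lambda>N. RN N x y)"
proof -
  let ?k = "\<lambda>p. if p = (x, y) then 1 else 0"
  have "monomial ?k N = RN N x y" for N
  proof -
    have "monomial ?k N = (\<Prod>p\<in>edges. if p = (x, y) then RN N (fst p) (snd p) else 1)"
      unfolding monomial_def by (intro prod.cong) auto
    then show ?thesis using xy by (simp add: prod.delta)
  qed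
  moreover have "RN N x y \<noteq> 0" for N using edge_rate_pos[OF xy, of N] by simp
  ultimately have "(\<lambda>N. RN N x y / monomial_quotient ?k (\<lambda>_. 0) N) = (\<lambda>N. 1)"
    by (simp add: monomial_quotient_def monomial_def[of "\<lambda>_. 0"])
  then show ?thesis
    using edge_rate_pos[OF xy] xy
    by (intro tameI[of _ ?k "\<lambda>_. 0" _ 1]) (auto simp: edge_exponent_def degree_def sum.delta)
qed

lemma tame_mult:
  assumes f: "tame d f" and g: "tame e g"
  shows "tame (d + e) (\<lambda>N. f N * g N)"
proof -
  obtain k l c where
    k: "edge_exponent k" "edge_exponent l" "int (degree k) - int (degree l) = d"
    "c > 0" "(\<lambda>N. f N / monomial_quotient k l N) \<longlonglongrightarrow> c" using f by (rule tameE)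
  obtain k' l' c' where
    k': "edge_exponent k'" "edge_exponent l'" "int (degree k') - int (degree l') = e"
    "c' > 0" "(\<lambda>N. g N / monomial_quotient k' l' N) \<longlonglongrightarrow> c'" using g by (rule tameE)
  have eq: "f N * g N / monomial_quotient (\<lambda>p. k p + k' p) (\<lambda>p. l p + l' p) N =
      (f N / monomial_quotient k l N) * (g N / monomial_quotient k' l' N)" for N
    unfolding monomial_quotient_def monomial_add
    using monomial_pos[of l N] monomial_pos[of l' N] monomial_pos[of k' N] monomial_pos[of k N]
    by (simp add: field_simps)
  show ?thesis
  proof (rule tameI)
    show "(\<lambda>N. f N * g N / monomial_quotient (\<lambda>p. k p + k' p) (\<lambda>p. l p + l' p) N) \<longlonglongrightarrow> c * c'"
      unfolding eq by (intro tendsto_mult k(5) k'(5))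
    show "int (degree (\<lambda>p. k p + k' p)) - int (degree (\<lambda>p. l p + l' p)) = d + e"
      using k(3) k'(3) by (simp add: degree_add)
    show "f N * g N > 0" for N using tame_pos[OF f, of N] tame_pos[OF g, of N] by simp
  qed (use k(1,2,4) k'(1,2,4) in \<open>simp_all add: edge_exponent_add\<close>)
qed

lemma tame_inverse:
  assumes f: "tame d f"
  shows "tame (- d) (\<lambda>N. 1 / f N)"
proof -
  obtain k l c where
    k: "edge_exponent k" "edge_exponent l" "int (degree k) - int (degree l) = d"
    "c > 0" "(\<lambda>N. f N / monomial_quotient k l N) \<longlonglongrightarrow> c" using f by (rule tameE)
  have eq: "1 / f N / monomial_quotient l k N = inverse (f N / monomial_quotient k l N)" for N
    unfolding monomial_quotient_def
      using monomial_pos[of l N] monomial_pos[of k N] tame_pos[OF f, of N]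
    by (simp add: field_simps)
  show ?thesis
  proof (rule tameI)
    show "(\<lambda>N. 1 / f N / monomial_quotient l k N) \<longlonglongrightarrow> inverse c"
      unfolding eq by (rule tendsto_inverse[OF k(5)]) (use k(4) in simp)
    show "1 / f N > 0" for N using tame_pos[OF f, of N] by simp
    show "int (degree l) - int (degree k) = - d" using k(3) by simp
  qed (use k(1,2,4) in auto)
qed

lemma tame_divide: "tame d f \<Longrightarrow> tame e g \<Longrightarrow> tame (d - e) (\<lambda>N. f N / g N)"
  using tame_mult[OF _ tame_inverse, of d f e g] by simp

text \<open>The sum is asymptotic to its dominant summand, which exists by comparability.\<close>
lemma tame_add:
  assumes f: "tame d f" and g: "tame d g"
  shows "tame d (\<lambda>N. f N + g N)"
proof -
  obtain k l c where
    k: "edge_exponent k" "edge_exponent l" "int (degree k) - int (degree l) = d"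
    "c > 0" "(\<lambda>N. f N / monomial_quotient k l N) \<longlonglongrightarrow> c" using f by (rule tameE)
  obtain k' l' c' where
    k': "edge_exponent k'" "edge_exponent l'" "int (degree k') - int (degree l') = d"
    "c' > 0" "(\<lambda>N. g N / monomial_quotient k' l' N) \<longlonglongrightarrow> c'" using g by (rule tameE)
  let ?q = "monomial_quotient k l" and ?q' = "monomial_quotient k' l'"
  have pos: "\<And>N. f N + g N > 0" using tame_pos[OF f] tame_pos[OF g] by (simp add: add_pos_pos)
  have q: "?q N > 0" "?q' N > 0" for N by (simp_all add: monomial_quotient_pos)
  have "has_extended_limit (\<lambda>N. ?q N / ?q' N)"
    by (rule has_extended_limit_monomial_quotient_ratio) (use k k' in simp_all)
  then consider L where "L \<ge> 0" "(\<lambda>N. ?q N / ?q' N) \<longlonglongrightarrow> L"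
    | "filterlim (\<lambda>N. ?q N / ?q' N) at_top sequentially"
    unfolding has_extended_limit_def by blast
  then show ?thesis
  proof cases
    case (1 L)
    have "(f N + g N) / ?q' N = (f N / ?q N) * (?q N / ?q' N) + g N / ?q' N" for N
      using q[of N] by (simp add: field_simps)
    then have "(\<lambda>N. (f N + g N) / ?q' N) \<longlonglongrightarrow> c * L + c'"
      by (simp only:) (intro tendsto_add tendsto_mult k(5) k'(5) 1)
    moreover have "c * L + c' > 0" using 1 k(4) k'(4) by (simp add: add_nonneg_pos)
    ultimately show ?thesis using pos k' by (intro tameI[of _ k' l' _ "c * L + c'"]) auto
  next
    case 2
    have "(f N + g N) / ?q N = f N / ?q N + (g N / ?q' N) * inverse (?q N / ?q' N)" for N
      using q[of N] by (simp add: field_simps)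
    moreover have "(\<lambda>N. inverse (?q N / ?q' N)) \<longlonglongrightarrow> 0"
      using 2 by (rule tendsto_inverse_0_at_top)
    ultimately have "(\<lambda>N. (f N + g N) / ?q N) \<longlonglongrightarrow> c + c' * 0"
      by (simp only:) (intro tendsto_add tendsto_mult k(5) k'(5))
    then show ?thesis using pos k by (intro tameI[of _ k l _ c]) auto
  qed
qed

lemma tame_ordered_family:
  assumes "\<And>C. C \<in> I \<Longrightarrow> tame d (a C)"
  shows "ordered_family I a"
  unfolding ordered_family_def
proof (intro conjI ballI allI impI)
  show "a C N > 0" if "C \<in> I" for C N using assms[OF that] by (rule tame_pos)
  show "convergent (\<lambda>N. arctan (a C N / a C' N))" if "C \<in> I" "C' \<in> I" for C C'
    using tame_has_extended_limit_ratio[OF assms[OF that(1)] assms[OF that(2)]]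
      tame_pos[OF assms[OF that(1)]] tame_pos[OF assms[OF that(2)]]
    by (subst (asm) has_extended_limit_iff_convergent_arctan) simp_all
qed

lemma tame_or_zero_zero: "tame_or_zero d (\<lambda>N. 0)"
  unfolding tame_or_zero_def by simp

lemma tame_or_zero_if_tame: "tame d f \<Longrightarrow> tame_or_zero d f"
  unfolding tame_or_zero_def by simp

lemma tame_or_zero_nonneg: "tame_or_zero d f \<Longrightarrow> f N \<ge> 0"
  unfolding tame_or_zero_def using tame_pos[of d f N] by auto

lemma tame_if_tame_or_zero_pos: "tame_or_zero d f \<Longrightarrow> f N > 0 \<Longrightarrow> tame d f"
  unfolding tame_or_zero_def by auto

lemma tame_or_zero_add: "tame_or_zero d f \<Longrightarrow> tame_or_zero d g \<Longrightarrow> tame_or_zero d (\<lambda>N. f N + g N)"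
  unfolding tame_or_zero_def using tame_add by auto

lemma tame_or_zero_mult:
  "tame_or_zero d f \<Longrightarrow> tame_or_zero e g \<Longrightarrow> tame_or_zero (d + e) (\<lambda>N. f N * g N)"
  unfolding tame_or_zero_def using tame_mult by auto

lemma tame_or_zero_divide: "tame_or_zero d f \<Longrightarrow> tame e g \<Longrightarrow> tame_or_zero (d - e) (\<lambda>N. f N / g N)"
  unfolding tame_or_zero_def using tame_divide by auto

lemma tame_or_zero_sum:
  "(\<And>x. x \<in> S \<Longrightarrow> tame_or_zero d (f x)) \<Longrightarrow> tame_or_zero d (\<lambda>N. \<Sum>x\<in>S. f x N)"
proof (induction S rule: infinite_finite_induct)
  case (insert x F)
  then show ?case using tame_or_zero_add[of d "f x" "\<lambda>N. \<Sum>x\<in>F. f x N"] by simp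
qed (simp_all add: tame_or_zero_zero)

lemma tame_or_zero_rate: "x \<noteq> y \<Longrightarrow> tame_or_zero 1 (\<lambda>N. RN N x y)"
  using rate_zero_or_pos[of x y] tame_rate[of x y] tame_or_zero_zero
  unfolding tame_or_zero_def jump_graph_def by fastforce

section \<open>Tame rates\<close>

definition tame_rates :: "(nat \<Rightarrow> 'a \<Rightarrow> 'a \<Rightarrow> real) \<Rightarrow> bool" where
  "tame_rates R \<longleftrightarrow> (\<forall>N x y. R N x y \<ge> 0) \<and> (\<forall>x y. x \<noteq> y \<longrightarrow> tame_or_zero 1 (\<lambda>N. R N x y))"

lemma tame_rates_RN: "tame_rates RN"
  unfolding tame_rates_def using nonneg tame_or_zero_rate by blast

lemma tame_rates_nonneg: "tame_rates R \<Longrightarrow> R N x y \<ge> 0"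
  unfolding tame_rates_def by blast

lemma tame_rates_tame_or_zero: "tame_rates R \<Longrightarrow> x \<noteq> y \<Longrightarrow> tame_or_zero 1 (\<lambda>N. R N x y)"
  unfolding tame_rates_def by blast

lemma tame_rates_edge_pos:
  assumes R: "tame_rates R" and ab: "(a, b) \<in> jump_graph (R 0)"
  shows "R N a b > 0"
proof -
  have "a \<noteq> b" "R 0 a b > 0" using ab unfolding jump_graph_def by auto
  then have "tame 1 (\<lambda>N. R N a b)" by (intro tame_if_tame_or_zero_pos tame_rates_tame_or_zero[OF R])
  then show ?thesis by (rule tame_pos)
qed

lemma tame_rates_hold_rate_pos:
  assumes R: "tame_rates R" and zw: "(z, w) \<in> jump_graph (R 0)"
  shows "hold_rate (R N) z > 0"
proof -
  have "R N z w \<le> hold_rate (R N) z"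
    unfolding hold_rate_def using zw
      by (intro member_le_sum tame_rates_nonneg[OF R]) (auto simp: jump_graph_def)
  then show ?thesis using tame_rates_edge_pos[OF R zw, of N] by simp
qed

lemma tame_hold_rate:
  assumes R: "tame_rates R" and zw: "(z, w) \<in> jump_graph (R 0)"
  shows "tame 1 (\<lambda>N. hold_rate (R N) z)"
proof -
  have "tame_or_zero 1 (\<lambda>N. \<Sum>y\<in>UNIV - {z}. R N z y)"
    by (rule tame_or_zero_sum) (auto intro: tame_rates_tame_or_zero[OF R])
  moreover have "(\<Sum>y\<in>UNIV - {z}. R 0 z y) > 0"
    using tame_rates_hold_rate_pos[OF R zw, of 0] unfolding hold_rate_def .
  ultimately show ?thesis unfolding hold_rate_def by (rule tame_if_tame_or_zero_pos)
qed

lemma tame_rates_eliminate: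
  assumes R: "tame_rates R" and zw: "(z, w) \<in> jump_graph (R 0)"
  shows "tame_rates (\<lambda>N. eliminate (R N) z)"
  unfolding tame_rates_def
proof (intro conjI allI impI)
  show "eliminate (R N) z x y \<ge> 0" for N x y
    by (rule eliminate_nonneg) (rule tame_rates_nonneg[OF R])
  fix x y :: 'a assume "x \<noteq> y"
  show "tame_or_zero 1 (\<lambda>N. eliminate (R N) z x y)"
  proof (cases "x = z \<or> y = z")
    case False
    have "tame_or_zero ((1 + 1) - 1) (\<lambda>N. R N x z * R N z y / hold_rate (R N) z)"
      using False by (intro tame_or_zero_divide tame_or_zero_mult tame_rates_tame_or_zero[OF R]
          tame_hold_rate[OF R zw]) auto
    then have "tame_or_zero 1 (\<lambda>N. R N x y + R N x z * R N z y / hold_rate (R N) z)"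
      using tame_or_zero_add[OF tame_rates_tame_or_zero[OF R \<open>x \<noteq> y\<close>]] by simp
    then show ?thesis using False unfolding eliminate_def by simp
  qed (simp add: eliminate_def tame_or_zero_zero)
qed

lemma tame_or_zero_harmonic_average:
  assumes R: "tame_rates R" and zw: "(z, w) \<in> jump_graph (R 0)"
    and h: "\<And>y. tame_or_zero 0 (\<lambda>N. h N y)"
  shows "tame_or_zero 0 (\<lambda>N. (\<Sum>y\<in>UNIV - {z}. R N z y * h N y) / hold_rate (R N) z)"
proof -
  have "tame_or_zero ((1 + 0) - 1) (\<lambda>N. (\<Sum>y\<in>UNIV - {z}. R N z y * h N y) / hold_rate (R N) z)"
    by (intro tame_or_zero_divide tame_or_zero_sum tame_or_zero_mult
        tame_rates_tame_or_zero[OF R] tame_hold_rate[OF R zw] h) auto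
  then show ?thesis by simp
qed

lemma tame_invariant_average:
  assumes R: "tame_rates R" and zw: "(z, w) \<in> jump_graph (R 0)"
    and m: "\<And>x. tame_or_zero 0 (\<lambda>N. m N x)"
    and v: "(v, z) \<in> jump_graph (R 0)" "tame 0 (\<lambda>N. m N v)"
  shows "tame 0 (\<lambda>N. (\<Sum>x\<in>UNIV - {z}. m N x * R N x z) / hold_rate (R N) z)"
proof (rule tame_if_tame_or_zero_pos)
  have "tame_or_zero ((0 + 1) - 1) (\<lambda>N. (\<Sum>x\<in>UNIV - {z}. m N x * R N x z) / hold_rate (R N) z)"
    by (intro tame_or_zero_divide tame_or_zero_sum tame_or_zero_mult
        tame_rates_tame_or_zero[OF R] tame_hold_rate[OF R zw] m) auto
  then show "tame_or_zero 0 (\<lambda>N. (\<Sum>x\<in>UNIV - {z}. m N x * R N x z) / hold_rate (R N) z)"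
    by simp
  have "v \<noteq> z" "R 0 v z > 0" using v(1) unfolding jump_graph_def by auto
  then have "m 0 v * R 0 v z > 0" using tame_pos[OF v(2)] by simp
  then have "(\<Sum>x\<in>UNIV - {z}. m 0 x * R 0 x z) > 0"
    using \<open>v \<noteq> z\<close> tame_or_zero_nonneg[OF m] tame_rates_nonneg[OF R]
    by (intro sum_pos2[of _ v]) auto
  then show "(\<Sum>x\<in>UNIV - {z}. m 0 x * R 0 x z) / hold_rate (R 0) z > 0"
    using tame_rates_hold_rate_pos[OF R zw, of 0] by simp
qed

text \<open>Eliminating the states of \<open>D\<close> one at a time, a harmonic function with prescribed tame
  boundary values is built by the averaging step, which preserves tameness.\<close>
lemma tame_harmonic_exists:
  assumes "tame_rates R"
    and "\<And>x. x \<in> D \<Longrightarrow> \<exists>y. y \<notin> D \<and> (x, y) \<in> (jump_graph (R 0))\<^sup>*"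
    and "\<And>x. x \<notin> D \<Longrightarrow> tame_or_zero 0 (\<lambda>N. b N x)"
  shows "\<exists>h. (\<forall>N x. x \<notin> D \<longrightarrow> h N x = b N x) \<and> (\<forall>x. tame_or_zero 0 (\<lambda>N. h N x)) \<and>
    (\<forall>N x. x \<in> D \<longrightarrow> harmonic_at (R N) (h N) x)"
  using assms
proof (induction D arbitrary: R b rule: infinite_finite_induct)
  case empty
  then show ?case by auto
next
  case (insert z D)
  note R = insert.prems(1)
  obtain y0 where "y0 \<notin> insert z D" "(z, y0) \<in> (jump_graph (R 0))\<^sup>*"
    using insert.prems(2) by blast
  then obtain w where zw: "(z, w) \<in> jump_graph (R 0)" by (metis converse_rtranclE insertI1)
  have l: "hold_rate (R N) z \<noteq> 0" for N using tame_rates_hold_rate_pos[OF R zw]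
    by (metis less_irrefl)
  define R' where "R' N = eliminate (R N) z" for N
  have R': "tame_rates R'" unfolding R'_def by (rule tame_rates_eliminate[OF R zw])
  have reach': "\<exists>y. y \<notin> D \<and> (x, y) \<in> (jump_graph (R' 0))\<^sup>*" if "x \<in> D" for x
  proof -
    obtain y where y: "y \<notin> insert z D" "(x, y) \<in> (jump_graph (R 0))\<^sup>*"
      using insert.prems(2) that by blast
    have "x \<noteq> z" using that insert.hyps by blast
    then have "(x, y) \<in> (jump_graph (R' 0))\<^sup>*"
      unfolding R'_def
        using rtrancl_jump_graph_eliminate[where r = "R 0", OF tame_rates_nonneg[OF R] y(2)] y(1)
      by blast
    then show ?thesis using y(1) by blast
  qed
  have b': "tame_or_zero 0 (\<lambda>N. ((b N)(z := 0)) x)" if "x \<notin> D" for x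
    using insert.prems(3)[of x] that tame_or_zero_zero by (cases "x = z") simp_all
  obtain h' where h': "\<And>N x. x \<notin> D \<Longrightarrow> h' N x = ((b N)(z := 0)) x" "\<And>x. tame_or_zero 0 (\<lambda>N. h' N x)"
    "\<And>N x. x \<in> D \<Longrightarrow> harmonic_at (R' N) (h' N) x"
    using insert.IH[of R' "\<lambda>N. (b N)(z := 0)", OF R' reach' b'] by blast
  define h where "h N = (h' N)(z := (\<Sum>y\<in>UNIV - {z}. R N z y * h' N y) / hold_rate (R N) z)" for N
  have "tame_or_zero 0 (\<lambda>N. h N x)" for x
    using tame_or_zero_harmonic_average[OF R zw h'(2)] h'(2) unfolding h_def
      by (cases "x = z") simp_all
  moreover have "h N x = b N x" if "x \<notin> insert z D" for N x
    using h'(1) that unfolding h_def by simp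
  moreover have "harmonic_at (R N) (h N) x" if "x \<in> insert z D" for N x
    unfolding h_def using l h'(3) that unfolding R'_def by (intro harmonic_at_extend) auto
  ultimately show ?case by blast
qed simp

lemma tame_invariant_measure_exists:
  assumes "S \<noteq> {}" and "tame_rates R"
    and "\<And>N x y. x \<notin> S \<or> y \<notin> S \<Longrightarrow> R N x y = 0"
    and "\<And>x y. x \<in> S \<Longrightarrow> y \<in> S \<Longrightarrow> (x, y) \<in> (jump_graph (R 0))\<^sup>*"
  shows "\<exists>m. (\<forall>x\<in>S. tame 0 (\<lambda>N. m N x)) \<and> (\<forall>N x. x \<notin> S \<longrightarrow> m N x = 0) \<and>
    (\<forall>N y. balanced_at (R N) (m N) y)"
proof -
  have "finite S" by simp
  then show ?thesis using assms
  proof (induction S arbitrary: R rule: finite_ne_induct)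
    case (singleton s)
    have "R N x y = 0" if "x \<noteq> y" for N x y using singleton.prems(2)[of x y N] that by blast
    then have "balanced_at (R N) (\<lambda>x. if x = s then 1 else 0) y" for N y
      unfolding balanced_at_def hold_rate_def by simp
    then show ?case by (intro exI[of _ "\<lambda>N x. if x = s then 1 else 0"]) (simp add: tame_const_one)
  next
    case (insert z F)
    note R = insert.prems(1) and outside = insert.prems(2) and conn = insert.prems(3)
    obtain s where s: "s \<in> F" using insert.hyps(2) by blast
    have sz: "s \<noteq> z" using s insert.hyps(3) by blast
    obtain w where zw: "(z, w) \<in> jump_graph (R 0)"
      using conn[of z s] s sz by (metis converse_rtranclE insertCI)
    have l: "hold_rate (R N) z \<noteq> 0" for N using tame_rates_hold_rate_pos[OF R zw]
      by (metis less_irrefl)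
    define R' where "R' N = eliminate (R N) z" for N
    have R': "tame_rates R'" unfolding R'_def by (rule tame_rates_eliminate[OF R zw])
    have outside': "R' N x y = 0" if "x \<notin> F \<or> y \<notin> F" for N x y
      using outside that unfolding R'_def eliminate_def by auto
    have conn': "(x, y) \<in> (jump_graph (R' 0))\<^sup>*" if "x \<in> F" "y \<in> F" for x y
      unfolding R'_def using that insert.hyps(3) conn
      by (intro rtrancl_jump_graph_eliminate[where r = "R 0"] tame_rates_nonneg[OF R]) auto
    obtain m' where m': "\<And>x. x \<in> F \<Longrightarrow> tame 0 (\<lambda>N. m' N x)" "\<And>N x. x \<notin> F \<Longrightarrow> m' N x = 0"
      "\<And>N y. balanced_at (R' N) (m' N) y"
      using insert.IH[of R', OF R' outside' conn'] by blast
    have m'_tame_or_zero: "tame_or_zero 0 (\<lambda>N. m' N x)" for x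
      using m'(1,2) tame_or_zero_if_tame tame_or_zero_zero by (cases "x \<in> F") simp_all
    define m where "m N = (m' N)(z := (\<Sum>x\<in>UNIV - {z}. m' N x * R N x z) / hold_rate (R N) z)" for N
    \<comment> \<open>the last jump of a path from \<open>s\<close> to \<open>z\<close> comes from a state \<open>v \<in> F\<close> of positive mass\<close>
    obtain v where v: "(v, z) \<in> jump_graph (R 0)"
      using conn[of s z] s sz by (metis rtranclE insertCI)
    then have "v \<noteq> z" "R 0 v z > 0" unfolding jump_graph_def by auto
    then have "v \<in> F" using outside[of v z 0] by (metis insertE less_irrefl)
    then have "tame 0 (\<lambda>N. m N z)"
      unfolding m_def using tame_invariant_average[OF R zw m'_tame_or_zero v m'(1)] by simp
    moreover have "tame 0 (\<lambda>N. m N x)" if "x \<in> F" for x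
    proof -
      have "x \<noteq> z" using that insert.hyps(3) by blast
      then show ?thesis using m'(1)[OF that] unfolding m_def by simp
    qed
    ultimately have "\<forall>x\<in>insert z F. tame 0 (\<lambda>N. m N x)" by blast
    moreover have "m N x = 0" if "x \<notin> insert z F" for N x using m'(2) that unfolding m_def by simp
    moreover have "balanced_at (R N) (m N) y" for N y
      unfolding m_def using l m'(3) unfolding R'_def by (intro balanced_at_extend)
    ultimately show ?case by blast
  qed
qed

lemma irreducible_rtrancl_jump_graph: "irreducible_chain (RN 0) \<Longrightarrow> (x, y) \<in> (jump_graph (RN N))\<^sup>*"
  using jump_graph_RN[of N] unfolding irreducible_chain_def reachable_def by simp

lemma tame_inv_meas:
  assumes irr: "irreducible_chain (RN 0)"
  obtains \<mu> where "\<And>x. tame 0 (\<lambda>N. \<mu> N x)" and "\<And>N. inv_meas (RN N) = \<mu> N"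
proof -
  have conn: "(x, y) \<in> (jump_graph (RN N))\<^sup>*" for N x y
    using irreducible_rtrancl_jump_graph[OF irr] .
  have "\<exists>m. (\<forall>x\<in>UNIV. tame 0 (\<lambda>N. m N x)) \<and> (\<forall>N x. x \<notin> UNIV \<longrightarrow> m N x = 0) \<and>
      (\<forall>N y. balanced_at (RN N) (m N) y)"
    by (rule tame_invariant_measure_exists[OF UNIV_not_empty tame_rates_RN]) (simp_all add: conn)
  then obtain m where m: "\<And>x. tame 0 (\<lambda>N. m N x)" "\<And>N y. balanced_at (RN N) (m N) y"
    by blast
  define \<mu> where "\<mu> N x = m N x / sum (m N) UNIV" for N x
  have total: "tame 0 (\<lambda>N. sum (m N) UNIV)"
  proof (rule tame_if_tame_or_zero_pos)
    show "tame_or_zero 0 (\<lambda>N. sum (m N) UNIV)"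
      by (rule tame_or_zero_sum) (rule tame_or_zero_if_tame[OF m(1)])
    show "sum (m 0) UNIV > 0" by (intro sum_pos) (simp_all add: tame_pos[OF m(1)])
  qed
  have \<mu>_inv: "invariant_prob (RN N) (\<mu> N)" for N
    unfolding invariant_prob_def \<mu>_def
  proof (intro conjI allI)
    have pos: "sum (m N) UNIV > 0" by (rule tame_pos[OF total])
    show "m N x / sum (m N) UNIV \<ge> 0" for x using tame_pos[OF m(1), of N x] pos by simp
    show "(\<Sum>x\<in>UNIV. m N x / sum (m N) UNIV) = 1" using pos
      by (simp add: sum_divide_distrib[symmetric])
    show "(\<Sum>x\<in>UNIV - {y}. m N x / sum (m N) UNIV * RN N x y) =
        m N y / sum (m N) UNIV * hold_rate (RN N) y" for y
      using m(2)[of N y] unfolding balanced_at_def by (simp add: sum_divide_distrib[symmetric])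
  qed
  have "inv_meas (RN N) = \<mu> N" for N
    unfolding inv_meas_def
    by (rule the_equality[of "invariant_prob (RN N)", OF \<mu>_inv])
      (rule invariant_prob_unique[where r = "RN N", OF nonneg conn _ \<mu>_inv])
  moreover have "tame 0 (\<lambda>N. \<mu> N x)" for x
    unfolding \<mu>_def using tame_divide[OF m(1) total] by simp
  ultimately show ?thesis using that by blast
qed

lemma tame_capacity_ratio:
  assumes irr: "irreducible_chain (RN 0)" and AB: "A \<inter> B = {}" and a: "a \<in> A" and b: "b \<in> B"
  shows "tame 1 (\<lambda>N. capacity (RN N) A B / sum (inv_meas (RN N)) A)"
proof -
  obtain \<mu> where \<mu>: "\<And>x. tame 0 (\<lambda>N. \<mu> N x)" "\<And>N. inv_meas (RN N) = \<mu> N"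
    using tame_inv_meas[OF irr] by blast
  have conn: "(x, y) \<in> (jump_graph (RN N))\<^sup>*" for N x y
    using irreducible_rtrancl_jump_graph[OF irr] .
  have "\<exists>h. (\<forall>N x. x \<notin> - (A \<union> B) \<longrightarrow> h N x = (if x \<in> B then 1 else 0)) \<and>
      (\<forall>x. tame_or_zero 0 (\<lambda>N. h N x)) \<and> (\<forall>N x. x \<in> - (A \<union> B) \<longrightarrow> harmonic_at (RN N) (h N) x)"
  proof (rule tame_harmonic_exists[OF tame_rates_RN])
    show "\<exists>y. y \<notin> - (A \<union> B) \<and> (x, y) \<in> (jump_graph (RN 0))\<^sup>*" for x
      using b conn by blast
    show "tame_or_zero 0 (\<lambda>N. if x \<in> B then 1 else 0)" for x :: 'a
      by (cases "x \<in> B") (simp_all add: tame_or_zero_if_tame[OF tame_const_one] tame_or_zero_zero)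
  qed
  then obtain h where boundary: "\<And>N x. x \<in> A \<union> B \<Longrightarrow> h N x = (if x \<in> B then 1 else 0)"
    and h: "\<And>x. tame_or_zero 0 (\<lambda>N. h N x)" and harm: "\<And>N x. x \<notin> A \<union> B \<Longrightarrow> harmonic_at (RN N) (h N) x"
    by blast
  have hA: "h N x = 0" if "x \<in> A" for N x using boundary[of x N] that AB by auto
  have hB: "h N x = 1" if "x \<in> B" for N x using boundary[of x N] that by simp
  define flow where "flow N = (\<Sum>e\<in>A. \<mu> N e * (\<Sum>y\<in>UNIV - {e}. RN N e y * h N y))" for N
  have cap: "capacity (RN N) A B = flow N" for N
    unfolding flow_def \<mu>(2)[symmetric]
    by (rule capacity_eq_harmonic[where r = "RN N", OF nonneg AB _ hA hB harm])
      (use b conn in blast)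
  have flow: "tame (0 + (1 + 0)) flow"
  proof (rule tame_if_tame_or_zero_pos)
    show "tame_or_zero (0 + (1 + 0)) flow" unfolding flow_def
      by (intro tame_or_zero_sum tame_or_zero_mult tame_or_zero_if_tame \<mu>(1) tame_or_zero_rate h)
        auto
    show "flow 0 > 0" unfolding flow_def
      using harmonic_flow_pos[where r = "RN 0" and h = "h 0", OF nonneg AB a b conn
          tame_or_zero_nonneg[OF h] hB harm tame_pos[OF \<mu>(1)]] .
  qed
  have mass: "tame 0 (\<lambda>N. sum (\<mu> N) A)"
  proof (rule tame_if_tame_or_zero_pos)
    show "tame_or_zero 0 (\<lambda>N. sum (\<mu> N) A)"
      by (rule tame_or_zero_sum) (rule tame_or_zero_if_tame[OF \<mu>(1)])
    show "sum (\<mu> 0) A > 0"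
      using a tame_pos[OF \<mu>(1)] by (intro sum_pos2[of _ a]) (simp_all add: less_imp_le)
  qed
  show ?thesis
    using tame_divide[OF flow mass] unfolding cap \<mu>(2) by simp
qed

lemma ordered_family_capacity_ratios:
  assumes irr: "irreducible_chain (RN 0)"
    and nonempty: "\<And>C. C \<in> Cs \<Longrightarrow> C \<noteq> {}"
    and disjoint: "\<And>C C'. C \<in> Cs \<Longrightarrow> C' \<in> Cs \<Longrightarrow> C \<noteq> C' \<Longrightarrow> C \<inter> C' = {}"
    and other: "\<And>C. C \<in> Cs \<Longrightarrow> \<exists>C'\<in>Cs. C' \<noteq> C"
  shows "ordered_family Cs (\<lambda>C N. capacity (RN N) C (\<Union> (Cs - {C})) / sum (inv_meas (RN N)) C)"
proof (rule tame_ordered_family)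
  fix C assume C: "C \<in> Cs"
  obtain C' where "C' \<in> Cs" "C' \<noteq> C" using other[OF C] by blast
  then obtain b where "b \<in> \<Union> (Cs - {C})" using nonempty by blast
  moreover obtain a where "a \<in> C" using nonempty[OF C] by blast
  moreover have "C \<inter> \<Union> (Cs - {C}) = {}" using disjoint C by blast
  ultimately show "tame 1 (\<lambda>N. capacity (RN N) C (\<Union> (Cs - {C})) / sum (inv_meas (RN N)) C)"
    by (intro tame_capacity_ratio[OF irr])
qed

end

theorem mainTheorem17:
  fixes RN :: "nat \<Rightarrow> 'a::finite \<Rightarrow> 'a \<Rightarrow> real"
  assumes nonneg: "\<And>N x y. RN N x y \<ge> 0"
    and irred: "\<And>N. irreducible_chain (RN N)"
    and A: "assumption_A RN"
    and two: "card (recurrent_classes (limit_rates RN)) \<ge> 2"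
  shows "ordered_family (recurrent_classes (limit_rates RN))
           (\<lambda>C N. capacity (RN N) C (\<Union> (recurrent_classes (limit_rates RN) - {C}))
                  / sum (inv_meas (RN N)) C)"
proof (rule rate_asymptotics.ordered_family_capacity_ratios)
  show "rate_asymptotics RN" using nonneg A by unfold_locales
  show "irreducible_chain (RN 0)" by (rule irred)
  let ?Cs = "recurrent_classes (limit_rates RN)"
  show "\<exists>C'\<in>?Cs. C' \<noteq> C" if "C \<in> ?Cs" for C
  proof (rule ccontr)
    assume "\<not> (\<exists>C'\<in>?Cs. C' \<noteq> C)"
    then have "?Cs \<subseteq> {C}" by blast
    then show False using card_mono[of "{C}" ?Cs] two by simp
  qed
qed (simp_all add: recurrent_classes_nonempty recurrent_classes_disjoint)

end
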